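(* For any $2\le r\le\infty$, $1\le k\le p+q+1$ and $\theta\in\Theta_\delta$, there exists a constant $K$ such that $\|\dot\lambda^t_k(\theta)\|_{\ell^r}\le K$ for all $t\ge1$.
   Context: Setting: $d_0\in(-1/2,1/2)$; $a(z)=1-\sum_{i=1}^pa_iz^i$, $b(z)=1-\sum_{i=1}^qb_iz^i$ have roots outside the unit disk, no common factors. For $\theta=(\theta_1,\dots,\theta_{p+q},d)$, $a_\theta(z)=1-\sum_{i=1}^p\theta_iz^i$, $b_\theta(z)=1-\sum_{j=1}^q\theta_{p+j}z^j$; $\Theta_\delta=\Theta^*_\delta\times[d_1,d_2]$ where $\Theta^*_\delta$ is the set of $(\theta_1,\dots,\theta_{p+q})$ with all roots of $a_\theta,b_\theta$ of modulus $\ge1+\delta$, $[d_1,d_2]\subset(-1/2,1/2)$, $d_1-d_0>-1/2$, $\theta_0=(a_1,\dots,a_p,b_1,\dots,b_q,d_0)\in\Theta_\delta$. $\gamma(\theta)$: coefficients of $b_\theta^{-1}(z)a_\theta(z)(1-z)^d$; $\eta(\theta_0)$: coefficients of $(1-z)^{-d_0}a_{\theta_0}^{-1}(z)b_{\theta_0}(z)$; $\gamma^t_i(\theta)=\gamma_i(\theta)$ for $i\le t-1$ and $0$ otherwise; $\dot\lambda^t_k(\theta)=\frac{\partial\gamma^t(\theta)}{\partial\theta_k}*\eta(\theta_0)$ (convolution of sequences, $\theta_{p+q+1}=d$). *)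

theory Defs
  imports "HOL-Analysis.Analysis" "HOL-Computational_Algebra.Formal_Power_Series"
begin

(* Parameters theta :: nat => real, with theta 1..theta p the AR part,
   theta (p+1)..theta (p+q) the MA part and theta (p+q+1) = d. *)

definition a_fps :: "nat \<Rightarrow> (nat \<Rightarrow> real) \<Rightarrow> real fps" where
  "a_fps p \<theta> = 1 - Abs_fps (\<lambda>i. if 1 \<le> i \<and> i \<le> p then \<theta> i else 0)"

definition b_fps :: "nat \<Rightarrow> nat \<Rightarrow> (nat \<Rightarrow> real) \<Rightarrow> real fps" where
  "b_fps p q \<theta> = 1 - Abs_fps (\<lambda>j. if 1 \<le> j \<and> j \<le> q then \<theta> (p + j) else 0)"

(* (1 - z)^d as a formal power series (binomial series) *)
definition frac_fps :: "real \<Rightarrow> real fps" where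
  "frac_fps d = Abs_fps (\<lambda>n. (-1) ^ n * (d gchoose n))"

definition a_poly :: "nat \<Rightarrow> (nat \<Rightarrow> real) \<Rightarrow> complex \<Rightarrow> complex" where
  "a_poly p \<theta> z = 1 - (\<Sum>i=1..p. complex_of_real (\<theta> i) * z ^ i)"

definition b_poly :: "nat \<Rightarrow> nat \<Rightarrow> (nat \<Rightarrow> real) \<Rightarrow> complex \<Rightarrow> complex" where
  "b_poly p q \<theta> z = 1 - (\<Sum>j=1..q. complex_of_real (\<theta> (p + j)) * z ^ j)"

definition in_Theta :: "nat \<Rightarrow> nat \<Rightarrow> real \<Rightarrow> real \<Rightarrow> real \<Rightarrow> (nat \<Rightarrow> real) \<Rightarrow> bool" where
  "in_Theta p q \<delta> d1 d2 \<theta> \<longleftrightarrow>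
     (\<forall>z. a_poly p \<theta> z = 0 \<longrightarrow> 1 + \<delta> \<le> cmod z) \<and>
     (\<forall>z. b_poly p q \<theta> z = 0 \<longrightarrow> 1 + \<delta> \<le> cmod z) \<and>
     d1 \<le> \<theta> (p + q + 1) \<and> \<theta> (p + q + 1) \<le> d2"

definition gamma :: "nat \<Rightarrow> nat \<Rightarrow> (nat \<Rightarrow> real) \<Rightarrow> nat \<Rightarrow> real" where
  "gamma p q \<theta> i = fps_nth (inverse (b_fps p q \<theta>) * a_fps p \<theta> * frac_fps (\<theta> (p + q + 1))) i"

definition gamma_t :: "nat \<Rightarrow> nat \<Rightarrow> nat \<Rightarrow> (nat \<Rightarrow> real) \<Rightarrow> nat \<Rightarrow> real" where
  "gamma_t p q t \<theta> i = (if i + 1 \<le> t then gamma p q \<theta> i else 0)"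

definition eta :: "nat \<Rightarrow> nat \<Rightarrow> (nat \<Rightarrow> real) \<Rightarrow> nat \<Rightarrow> real" where
  "eta p q \<theta>0 i = fps_nth (frac_fps (- \<theta>0 (p + q + 1)) * inverse (a_fps p \<theta>0) * b_fps p q \<theta>0) i"

definition dlambda :: "nat \<Rightarrow> nat \<Rightarrow> nat \<Rightarrow> nat \<Rightarrow> (nat \<Rightarrow> real) \<Rightarrow> (nat \<Rightarrow> real) \<Rightarrow> nat \<Rightarrow> real" where
  "dlambda p q t k \<theta> \<theta>0 n =
     (\<Sum>j\<le>n. deriv (\<lambda>x. gamma_t p q t (\<theta>(k := x)) j) (\<theta> k) * eta p q \<theta>0 (n - j))"

definition lr_norm :: "ereal \<Rightarrow> (nat \<Rightarrow> real) \<Rightarrow> ereal" where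
  "lr_norm r x =
     (if r = \<infinity> then (SUP n. ereal \<bar>x n\<bar>)
      else if summable (\<lambda>n. \<bar>x n\<bar> powr real_of_ereal r)
      then ereal ((\<Sum>n. \<bar>x n\<bar> powr real_of_ereal r) powr (1 / real_of_ereal r))
      else \<infinity>)"

end

theory Submission
  imports Defs "HOL-Complex_Analysis.Complex_Analysis" "HOL-Real_Asymp.Real_Asymp"
begin

text \<open>
  The coefficients of \<open>(1 - z) powr x\<close> are \<open>O(n powr -(1 + x))\<close>, their derivatives in \<open>x\<close> lose
  only a logarithm, and the inverse of a polynomial without zeros in a disc of radius \<open>> 1\<close>
  has geometrically decaying coefficients. Hence \<open>\<partial>\<gamma>/\<partial>\<theta>\<^sub>k\<close> decays like \<open>n powr -\<alpha>\<close>
  and \<open>\<eta>\<close> like \<open>n powr -\<beta>\<close> for any \<open>\<alpha> < min 1 (1 + d)\<close>, \<open>\<beta> < min 1 (1 - d\<^sub>0)\<close>, and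
  \<open>d - d\<^sub>0 > -1/2\<close> allows \<open>\<alpha> + \<beta> > 3/2\<close>. Truncating \<open>\<gamma>\<close> does not enlarge these
  coefficient bounds, and the convolution of \<open>n powr -\<alpha>\<close> with \<open>n powr -\<beta>\<close> is
  \<open>O(n powr (1 - \<alpha> - \<beta>))\<close>, whose exponent is below \<open>-1/2\<close>. Such a sequence lies in every
  \<open>\<ell>\<^sup>r\<close> with \<open>r \<ge> 2\<close>, with a bound independent of \<open>t\<close>.
\<close>

unbundle no vec_syntax

section \<open>Convolutions of power sequences\<close>

lemma sum_powr_le:
  fixes a :: real
  assumes "0 \<le> a" "a < 1"
  shows "(\<Sum>m\<le>n. (real m + 1) powr (-a)) \<le> (real n + 1) powr (1 - a) / (1 - a)"
proof (induction n)
  case 0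
  then show ?case using assms by simp
next
  case (Suc n)
  have "\<exists>z>real n + 1. z < real n + 2 \<and> (real n + 2) powr (1 - a) - (real n + 1) powr (1 - a)
      = (real n + 2 - (real n + 1)) * ((1 - a) * z powr (1 - a - 1))"
    by (intro MVT2) (auto intro!: derivative_eq_intros)
  then obtain z where z: "real n + 1 < z" "z < real n + 2"
    "(real n + 2) powr (1 - a) - (real n + 1) powr (1 - a) = (1 - a) * z powr (- a)"
    by auto
  have "(real n + 2) powr (-a) \<le> z powr (-a)"
    by (rule powr_mono2') (use z assms in auto)
  with z assms have step: "(1 - a) * (real n + 2) powr (-a) \<le> (real n + 2) powr (1 - a) - (real n + 1) powr (1 - a)"
    by (simp add: mult_left_mono)
  have "(\<Sum>m\<le>Suc n. (real m + 1) powr (-a)) \<le> (real n + 1) powr (1 - a) / (1 - a) + (real n + 2) powr (-a)"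
    using Suc by (simp add: add.commute)
  also have "\<dots> = ((real n + 1) powr (1 - a) + (1 - a) * (real n + 2) powr (-a)) / (1 - a)"
    using assms by (simp add: field_simps)
  also have "\<dots> \<le> (real n + 2) powr (1 - a) / (1 - a)"
    using step assms by (intro divide_right_mono) auto
  finally show ?case by (simp add: add.commute)
qed

lemma summable_powr_Suc:
  fixes c :: real
  assumes "1 < c"
  shows "summable (\<lambda>n. (real n + 1) powr (-c))"
proof -
  have "summable (\<lambda>n. real (Suc n) powr (-c))"
    using assms by (subst summable_Suc_iff) (simp add: summable_real_powr_iff)
  then show ?thesis by (simp add: add.commute)
qed

lemma powr_neg_le_of_double:
  fixes a :: real and m n :: nat
  assumes "0 \<le> a" "real n + 1 \<le> 2 * (real m + 1)"
  shows "(real m + 1) powr (-a) \<le> 2 powr a * (real n + 1) powr (-a)"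
proof -
  have "(real n + 1) / 2 \<le> real m + 1"
    using assms(2) by simp
  then have "(real m + 1) powr (-a) \<le> ((real n + 1) / 2) powr (-a)"
    using assms(1) by (intro powr_mono2') auto
  also have "\<dots> = (real n + 1) powr (-a) / 2 powr (-a)"
    by (rule powr_divide)
  also have "\<dots> = 2 powr a * (real n + 1) powr (-a)"
    by (simp add: powr_minus divide_inverse)
  finally show ?thesis .
qed

lemma powr_neg_swap_le:
  fixes x y a b :: real
  assumes "0 < x" "x \<le> y" "a \<le> b"
  shows "y powr (-b) * x powr (-a) \<le> y powr (-a) * x powr (-b)"
proof -
  have "x powr (b - a) \<le> y powr (b - a)"
    using assms by (intro powr_mono2) auto
  have e: "x powr (-b) * x powr (b - a) = x powr (-a)" "y powr (-b) * y powr (b - a) = y powr (-a)"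
    by (simp_all flip: powr_add)
  have "y powr (-b) * x powr (-a) = y powr (-b) * (x powr (-b) * x powr (b - a))"
    using e by simp
  also have "\<dots> \<le> y powr (-b) * (x powr (-b) * y powr (b - a))"
    using \<open>x powr (b - a) \<le> y powr (b - a)\<close> by (intro mult_left_mono) auto
  also have "\<dots> = y powr (-a) * x powr (-b)"
    using e by (simp add: mult_ac)
  finally show ?thesis .
qed

definition powr_conv :: "real \<Rightarrow> real \<Rightarrow> nat \<Rightarrow> real" where
  "powr_conv a b n = (\<Sum>m\<le>n. (real m + 1) powr (-a) * (real (n - m) + 1) powr (-b))"

lemma sum_atMost_reflect:
  fixes f :: "nat \<Rightarrow> real"
  shows "(\<Sum>m\<le>n. f (n - m)) = (\<Sum>m\<le>n. f m)"
  using sum.atLeastAtMost_rev[of f 0 n] by (simp add: atLeast0AtMost)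

text \<open>Split according to which of \<open>m + 1\<close> and \<open>n - m + 1\<close> is at least \<open>(n + 1) / 2\<close>.\<close>

lemma powr_conv_term_le:
  fixes a b :: real
  assumes a: "0 \<le> a" and b: "0 \<le> b" and "m \<le> n"
  shows "(real m + 1) powr (-a) * (real (n - m) + 1) powr (-b)
    \<le> 2 powr a * (real n + 1) powr (-a) * (real (n - m) + 1) powr (-b)
      + 2 powr b * (real n + 1) powr (-b) * (real m + 1) powr (-a)"
proof (cases "real n + 1 \<le> 2 * (real m + 1)")
  case True
  then have "(real m + 1) powr (-a) * (real (n - m) + 1) powr (-b)
      \<le> 2 powr a * (real n + 1) powr (-a) * (real (n - m) + 1) powr (-b)"
    using powr_neg_le_of_double[where m = m and n = n] a by (intro mult_right_mono) auto
  moreover have "0 \<le> 2 powr b * (real n + 1) powr (-b) * (real m + 1) powr (-a)" by simp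
  ultimately show ?thesis by linarith
next
  case False
  then have "real n + 1 \<le> 2 * (real (n - m) + 1)" using assms(3) by (simp add: of_nat_diff)
  then have "(real m + 1) powr (-a) * (real (n - m) + 1) powr (-b)
      \<le> 2 powr b * (real n + 1) powr (-b) * (real m + 1) powr (-a)"
    using powr_neg_le_of_double[where m = "n - m" and n = n] b
    by (subst mult.commute) (intro mult_right_mono, auto)
  moreover have "0 \<le> 2 powr a * (real n + 1) powr (-a) * (real (n - m) + 1) powr (-b)" by simp
  ultimately show ?thesis by linarith
qed

lemma powr_conv_le:
  fixes a b :: real
  assumes a: "0 < a" "a < 1" and b: "0 < b" "b < 1"
  shows "powr_conv a b n \<le> (2 powr a / (1 - b) + 2 powr b / (1 - a)) * (real n + 1) powr (-(a + b - 1))"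
proof -
  let ?N = "real n + 1"
  have "powr_conv a b n \<le> (\<Sum>m\<le>n. 2 powr a * ?N powr (-a) * (real (n - m) + 1) powr (-b)
      + 2 powr b * ?N powr (-b) * (real m + 1) powr (-a))"
    unfolding powr_conv_def using a b by (intro sum_mono powr_conv_term_le) auto
  also have "\<dots> = 2 powr a * ?N powr (-a) * (\<Sum>m\<le>n. (real m + 1) powr (-b))
      + 2 powr b * ?N powr (-b) * (\<Sum>m\<le>n. (real m + 1) powr (-a))"
    by (simp only: sum.distrib sum_atMost_reflect[where f = "\<lambda>m. (real m + 1) powr (-b)"] flip: sum_distrib_left)
  also have "\<dots> \<le> 2 powr a * ?N powr (-a) * (?N powr (1 - b) / (1 - b))
      + 2 powr b * ?N powr (-b) * (?N powr (1 - a) / (1 - a))"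
    using a b by (intro add_mono mult_left_mono sum_powr_le) auto
  also have "\<dots> = 2 powr a / (1 - b) * (?N powr (-a) * ?N powr (1 - b))
      + 2 powr b / (1 - a) * (?N powr (-b) * ?N powr (1 - a))"
    by (simp add: divide_inverse mult_ac)
  also have "\<dots> = (2 powr a / (1 - b) + 2 powr b / (1 - a)) * ?N powr (-(a + b - 1))"
  proof -
    have "?N powr (-a) * ?N powr (1 - b) = ?N powr (-(a + b - 1))"
      "?N powr (-b) * ?N powr (1 - a) = ?N powr (-(a + b - 1))"
      by (simp_all add: algebra_simps flip: powr_add)
    then show ?thesis by (simp only: distrib_right)
  qed
  finally show ?thesis .
qed

lemma powr_conv_term_le_summable:
  fixes a c :: real
  assumes a: "0 \<le> a" "a \<le> c" and "m \<le> n"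
  shows "(real m + 1) powr (-c) * (real (n - m) + 1) powr (-a)
    \<le> 2 powr a * (real n + 1) powr (-a) * (real m + 1) powr (-c)
      + 2 powr c * (real n + 1) powr (-a) * (real (n - m) + 1) powr (-c)"
proof (cases "real n + 1 \<le> 2 * (real (n - m) + 1)")
  case True
  then have "(real m + 1) powr (-c) * (real (n - m) + 1) powr (-a)
      \<le> 2 powr a * (real n + 1) powr (-a) * (real m + 1) powr (-c)"
    using powr_neg_le_of_double[where m = "n - m" and n = n] a
    by (subst mult.commute) (intro mult_right_mono, auto)
  moreover have "0 \<le> 2 powr c * (real n + 1) powr (-a) * (real (n - m) + 1) powr (-c)" by simp
  ultimately show ?thesis by linarith
next
  case False
  then have "real n + 1 \<le> 2 * (real m + 1)" using assms(3) by (simp add: of_nat_diff)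
  then have "(real m + 1) powr (-c) \<le> 2 powr c * (real n + 1) powr (-c)"
    using a by (intro powr_neg_le_of_double) auto
  then have "(real m + 1) powr (-c) * (real (n - m) + 1) powr (-a)
      \<le> 2 powr c * (real n + 1) powr (-c) * (real (n - m) + 1) powr (-a)"
    by (rule mult_right_mono) simp
  also have "\<dots> = 2 powr c * ((real n + 1) powr (-c) * (real (n - m) + 1) powr (-a))"
    by (rule mult.assoc)
  also have "\<dots> \<le> 2 powr c * ((real n + 1) powr (-a) * (real (n - m) + 1) powr (-c))"
    using assms(3) a by (intro mult_left_mono powr_neg_swap_le) auto
  also have "\<dots> = 2 powr c * (real n + 1) powr (-a) * (real (n - m) + 1) powr (-c)"
    by (rule mult.assoc[symmetric])
  finally have "(real m + 1) powr (-c) * (real (n - m) + 1) powr (-a) \<le> \<dots>" .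
  moreover have "0 \<le> 2 powr a * (real n + 1) powr (-a) * (real m + 1) powr (-c)" by simp
  ultimately show ?thesis by linarith
qed

lemma powr_conv_le_summable:
  fixes a c :: real
  assumes c: "1 < c" and a: "0 \<le> a" "a \<le> c"
  shows "powr_conv c a n \<le> (2 powr a + 2 powr c) * (\<Sum>m. (real m + 1) powr (-c)) * (real n + 1) powr (-a)"
proof -
  let ?N = "real n + 1" and ?S = "\<Sum>m. (real m + 1) powr (-c)"
  have partial: "(\<Sum>m\<le>n. (real m + 1) powr (-c)) \<le> ?S"
    using summable_powr_Suc[OF c] by (intro sum_le_suminf) auto
  have "powr_conv c a n \<le> (\<Sum>m\<le>n. 2 powr a * ?N powr (-a) * (real m + 1) powr (-c)
      + 2 powr c * ?N powr (-a) * (real (n - m) + 1) powr (-c))"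
    unfolding powr_conv_def using a by (intro sum_mono powr_conv_term_le_summable) auto
  also have "\<dots> = 2 powr a * ?N powr (-a) * (\<Sum>m\<le>n. (real m + 1) powr (-c))
      + 2 powr c * ?N powr (-a) * (\<Sum>m\<le>n. (real m + 1) powr (-c))"
    by (simp only: sum.distrib sum_atMost_reflect[where f = "\<lambda>m. (real m + 1) powr (-c)"] flip: sum_distrib_left)
  also have "\<dots> \<le> 2 powr a * ?N powr (-a) * ?S + 2 powr c * ?N powr (-a) * ?S"
    using partial by (intro add_mono mult_left_mono) auto
  also have "\<dots> = (2 powr a + 2 powr c) * ?S * ?N powr (-a)"
    by (simp add: algebra_simps)
  finally show ?thesis .
qed

lemma powr_bound_nonneg:
  assumes "\<And>n. \<bar>u n\<bar> \<le> C * (real n + 1) powr (-a)"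
  shows "0 \<le> C"
  using assms[of 0] by (auto intro: order_trans[OF abs_ge_zero])

lemma convolution_le_powr_conv:
  fixes u v :: "nat \<Rightarrow> real"
  assumes u: "\<And>m. \<bar>u m\<bar> \<le> C * (real m + 1) powr (-a)"
    and v: "\<And>m. \<bar>v m\<bar> \<le> D * (real m + 1) powr (-b)"
  shows "\<bar>\<Sum>m\<le>n. u m * v (n - m)\<bar> \<le> C * D * powr_conv a b n"
proof -
  have "0 \<le> C"
    using u by (rule powr_bound_nonneg)
  have "\<bar>\<Sum>m\<le>n. u m * v (n - m)\<bar> \<le> (\<Sum>m\<le>n. \<bar>u m\<bar> * \<bar>v (n - m)\<bar>)"
    by (rule order_trans[OF sum_abs]) (simp add: abs_mult)
  also have "\<dots> \<le> (\<Sum>m\<le>n. (C * (real m + 1) powr (-a)) * (D * (real (n - m) + 1) powr (-b)))"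
    using \<open>0 \<le> C\<close> by (intro sum_mono mult_mono u v) auto
  also have "\<dots> = C * D * powr_conv a b n"
    by (simp add: powr_conv_def sum_distrib_left mult_ac)
  finally show ?thesis .
qed

section \<open>Power-law decay of coefficients\<close>

definition fps_decay :: "real \<Rightarrow> real fps \<Rightarrow> bool" where
  "fps_decay a f \<longleftrightarrow> (\<exists>C. \<forall>n. \<bar>f $ n\<bar> \<le> C * (real n + 1) powr (-a))"

lemma fps_decay_mono:
  assumes "fps_decay a f" "b \<le> a"
  shows "fps_decay b f"
proof -
  obtain C where C: "\<And>n. \<bar>f $ n\<bar> \<le> C * (real n + 1) powr (-a)"
    using assms(1) unfolding fps_decay_def by blast
  have "0 \<le> C"
    using C by (rule powr_bound_nonneg)
  have "\<bar>f $ n\<bar> \<le> C * (real n + 1) powr (-b)" for n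
  proof -
    have "(real n + 1) powr (-a) \<le> (real n + 1) powr (-b)"
      using assms(2) by (intro powr_mono) auto
    then show ?thesis
      using C[of n] \<open>0 \<le> C\<close> by (meson mult_left_mono order_trans)
  qed
  then show ?thesis unfolding fps_decay_def by blast
qed

lemma fps_decay_add:
  assumes "fps_decay a f" "fps_decay a g"
  shows "fps_decay a (f + g)"
proof -
  obtain C D where C: "\<And>n. \<bar>f $ n\<bar> \<le> C * (real n + 1) powr (-a)"
    and D: "\<And>n. \<bar>g $ n\<bar> \<le> D * (real n + 1) powr (-a)"
    using assms unfolding fps_decay_def by blast
  have "\<bar>(f + g) $ n\<bar> \<le> (C + D) * (real n + 1) powr (-a)" for n
    using C[of n] D[of n] abs_triangle_ineq[of "f $ n" "g $ n"] by (simp add: distrib_right)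
  then show ?thesis unfolding fps_decay_def by blast
qed

lemma fps_decay_uminus: "fps_decay a f \<Longrightarrow> fps_decay a (- f)"
  unfolding fps_decay_def by simp

lemma fps_decay_polynomial:
  fixes f :: "real fps"
  assumes "\<And>n. N < n \<Longrightarrow> f $ n = 0" "0 \<le> a"
  shows "fps_decay a f"
proof -
  define S where "S = (\<Sum>i\<le>N. \<bar>f $ i\<bar>)"
  have "\<bar>f $ n\<bar> \<le> (S * (real N + 1) powr a) * (real n + 1) powr (-a)" for n
  proof (cases "n \<le> N")
    case True
    have "\<bar>f $ n\<bar> \<le> S" unfolding S_def using True by (intro member_le_sum) auto
    moreover have "(real n + 1) powr a \<le> (real N + 1) powr a"
      using True assms(2) by (intro powr_mono2) auto
    then have "1 \<le> (real N + 1) powr a * (real n + 1) powr (-a)"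
      by (simp add: powr_minus field_simps)
    moreover have "0 \<le> S" unfolding S_def by (intro sum_nonneg) auto
    ultimately have "\<bar>f $ n\<bar> \<le> S * ((real N + 1) powr a * (real n + 1) powr (-a))"
      by (metis mult_left_mono mult.right_neutral order_trans)
    then show ?thesis by (simp only: mult.assoc)
  next
    case False
    then show ?thesis using assms(1)[of n] by (simp add: S_def sum_nonneg)
  qed
  then show ?thesis unfolding fps_decay_def by blast
qed

lemma fps_decay_mult_powr_conv:
  assumes "fps_decay a f" "fps_decay b g"
    and K: "\<And>n. powr_conv a b n \<le> K * (real n + 1) powr (-c)"
  shows "fps_decay c (f * g)"
proof -
  obtain C where C: "\<And>n. \<bar>f $ n\<bar> \<le> C * (real n + 1) powr (-a)"
    using assms(1) unfolding fps_decay_def by blast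
  obtain D where D: "\<And>n. \<bar>g $ n\<bar> \<le> D * (real n + 1) powr (-b)"
    using assms(2) unfolding fps_decay_def by blast
  have "0 \<le> C * D"
    using powr_bound_nonneg[OF C] powr_bound_nonneg[OF D] by simp
  have "\<bar>(f * g) $ n\<bar> \<le> (C * D * K) * (real n + 1) powr (-c)" for n
  proof -
    have "\<bar>(f * g) $ n\<bar> \<le> C * D * powr_conv a b n"
      unfolding fps_mult_nth atLeast0AtMost by (rule convolution_le_powr_conv[OF C D])
    also have "\<dots> \<le> C * D * (K * (real n + 1) powr (-c))"
      using K \<open>0 \<le> C * D\<close> by (rule mult_left_mono)
    finally show ?thesis by (simp add: mult_ac)
  qed
  then show ?thesis unfolding fps_decay_def by blast
qed

lemma fps_decay_mult_summable:
  assumes "fps_decay c f" "fps_decay a g" "1 < c" "0 \<le> a" "a \<le> c"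
  shows "fps_decay a (f * g)"
  using powr_conv_le_summable[OF assms(3-5)] by (rule fps_decay_mult_powr_conv[OF assms(1,2)])

lemma truncated_convolution_decay:
  assumes "fps_decay a f" "fps_decay b g" "0 < a" "a < 1" "0 < b" "b < 1"
  shows "\<exists>K. \<forall>t n. \<bar>\<Sum>j\<le>n. (if j < t then f $ j else 0) * g $ (n - j)\<bar> \<le> K * (real n + 1) powr (-(a + b - 1))"
proof -
  obtain C D where C: "\<And>n. \<bar>f $ n\<bar> \<le> C * (real n + 1) powr (-a)"
    and D: "\<And>n. \<bar>g $ n\<bar> \<le> D * (real n + 1) powr (-b)"
    using assms(1,2) unfolding fps_decay_def by blast
  have "0 \<le> C" "0 \<le> D"
    using powr_bound_nonneg[OF C] powr_bound_nonneg[OF D] by simp_all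
  define K where "K = C * D * (2 powr a / (1 - b) + 2 powr b / (1 - a))"
  have "\<bar>\<Sum>j\<le>n. (if j < t then f $ j else 0) * g $ (n - j)\<bar> \<le> C * D * powr_conv a b n" for t n
    by (rule convolution_le_powr_conv) (use C D \<open>0 \<le> C\<close> in auto)
  also have "C * D * powr_conv a b n \<le> K * (real n + 1) powr (-(a + b - 1))" for n
    using powr_conv_le[OF assms(3-6), of n] \<open>0 \<le> C\<close> \<open>0 \<le> D\<close>
    by (auto simp: K_def mult.assoc intro!: mult_left_mono)
  finally show ?thesis
    by blast
qed

section \<open>Inverses of polynomials without zeros near the unit disc\<close>

lemma fps_decay_of_conv_radius:
  fixes F :: "real fps"
  assumes "1 < fps_conv_radius F"
  shows "fps_decay c F"
proof -
  obtain s where "1 < ereal s" "ereal s < fps_conv_radius F"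
    using ereal_dense2[OF assms] by blast
  then have s: "1 < s" "norm s < fps_conv_radius F" by auto
  have "(\<lambda>n. F $ n * s ^ n) \<longlonglongrightarrow> 0"
    using summable_fps[OF s(2)] by (rule summable_LIMSEQ_zero)
  then have "Bseq (\<lambda>n. F $ n * s ^ n)"
    by (rule convergent_imp_Bseq[OF convergentI])
  then obtain M where M: "\<And>n. \<bar>F $ n * s ^ n\<bar> \<le> M"
    unfolding Bseq_def by auto
  have "(\<lambda>n. (real n + 1) powr c / s ^ n) \<longlonglongrightarrow> 0"
    using s(1) by real_asymp
  then have "Bseq (\<lambda>n. (real n + 1) powr c / s ^ n)"
    by (rule convergent_imp_Bseq[OF convergentI])
  then obtain M' where M': "\<And>n. \<bar>(real n + 1) powr c / s ^ n\<bar> \<le> M'"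
    unfolding Bseq_def by auto
  have "\<bar>F $ n\<bar> \<le> (M * M') * (real n + 1) powr (-c)" for n
  proof -
    have "\<bar>F $ n\<bar> * (real n + 1) powr c = \<bar>F $ n * s ^ n\<bar> * \<bar>(real n + 1) powr c / s ^ n\<bar>"
      using s(1) by (simp add: abs_mult)
    also have "\<dots> \<le> M * M'"
      using M M' by (intro mult_mono) (auto intro: order_trans[OF abs_ge_zero])
    finally have "\<bar>F $ n\<bar> * (real n + 1) powr c * (real n + 1) powr (-c) \<le> M * M' * (real n + 1) powr (-c)"
      by (intro mult_right_mono) auto
    then show ?thesis
      by (simp add: mult.assoc flip: powr_add)
  qed
  then show ?thesis unfolding fps_decay_def by blast
qed

text \<open>The library bounds the radius of convergence of an inverse only for complex series, hence the
  detour through the complexification \<open>cF\<close>.\<close>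

lemma fps_conv_radius_inverse_polynomial:
  fixes F :: "real fps" and N :: nat and R :: real
  assumes fin: "\<And>n. N < n \<Longrightarrow> F $ n = 0" and "0 < R"
    and roots: "\<And>z::complex. cmod z < R \<Longrightarrow> (\<Sum>i\<le>N. of_real (F $ i) * z ^ i) \<noteq> 0"
  shows "ereal R \<le> fps_conv_radius (inverse F)"
proof -
  define cF :: "complex fps" where "cF = Abs_fps (\<lambda>n. of_real (F $ n))"
  have eval: "eval_fps cF z = (\<Sum>i\<le>N. of_real (F $ i) * z ^ i)" for z
    unfolding eval_fps_def cF_def using fin by (subst suminf_finite[of "{..N}"]) auto
  have "F $ 0 \<noteq> 0"
    using roots[of 0] \<open>0 < R\<close> by simp
  then have "cF * Abs_fps (\<lambda>n. of_real (inverse F $ n)) = Abs_fps (\<lambda>n. of_real ((F * inverse F) $ n))"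
    by (intro fps_ext) (simp add: cF_def fps_mult_nth)
  also have "\<dots> = 1"
    using \<open>F $ 0 \<noteq> 0\<close> by (intro fps_ext) (simp add: inverse_mult_eq_1')
  finally have inv: "inverse cF = Abs_fps (\<lambda>n. of_real (inverse F $ n))"
    by (rule fps_inverse_unique)
  have "fps_conv_radius cF = \<infinity>"
  proof -
    have "fps_conv_radius cF = conv_radius (\<lambda>_. 0 :: complex)"
      unfolding fps_conv_radius_def cF_def using fin
      by (intro conv_radius_cong') (auto simp: eventually_sequentially intro!: exI[of _ "Suc N"])
    then show ?thesis by simp
  qed
  then have "ereal R \<le> fps_conv_radius (inverse cF)"
    using fps_conv_radius_inverse[of R cF] roots eval by auto
  also have "fps_conv_radius (inverse cF) = fps_conv_radius (inverse F)"
    unfolding inv fps_conv_radius_def by (intro conv_radius_cong) auto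
  finally show ?thesis .
qed

lemma fps_decay_inverse_polynomial:
  fixes F :: "real fps" and N :: nat and R :: real
  assumes "\<And>n. N < n \<Longrightarrow> F $ n = 0" and "1 < R"
    and "\<And>z::complex. cmod z < R \<Longrightarrow> (\<Sum>i\<le>N. of_real (F $ i) * z ^ i) \<noteq> 0"
  shows "fps_decay c (inverse F)"
proof (rule fps_decay_of_conv_radius)
  have "(1::ereal) < ereal R"
    using \<open>1 < R\<close> by simp
  also have "ereal R \<le> fps_conv_radius (inverse F)"
    using assms by (intro fps_conv_radius_inverse_polynomial) auto
  finally show "1 < fps_conv_radius (inverse F)" .
qed

lemma a_poly_eq_sum: "a_poly p \<theta> z = (\<Sum>i\<le>p. of_real (a_fps p \<theta> $ i) * z ^ i)"
proof -
  have "{..p} = insert 0 {1..p}" by auto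
  then show ?thesis
    by (simp add: a_fps_def a_poly_def sum_negf)
qed

lemma b_poly_eq_sum: "b_poly p q \<theta> z = (\<Sum>j\<le>q. of_real (b_fps p q \<theta> $ j) * z ^ j)"
proof -
  have "{..q} = insert 0 {1..q}" by auto
  then show ?thesis
    by (simp add: b_fps_def b_poly_def sum_negf)
qed

lemma fps_decay_inverse_a_fps:
  assumes "in_Theta p q \<delta> d1 d2 \<theta>" "0 < \<delta>"
  shows "fps_decay c (inverse (a_fps p \<theta>))"
proof (rule fps_decay_inverse_polynomial[where N = p and R = "1 + \<delta>"])
  show "p < n \<Longrightarrow> a_fps p \<theta> $ n = 0" for n
    by (simp add: a_fps_def)
  show "cmod z < 1 + \<delta> \<Longrightarrow> (\<Sum>i\<le>p. of_real (a_fps p \<theta> $ i) * z ^ i) \<noteq> 0" for z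
    using assms(1) unfolding a_poly_eq_sum[symmetric] in_Theta_def by force
qed (use assms in simp)

lemma fps_decay_inverse_b_fps:
  assumes "in_Theta p q \<delta> d1 d2 \<theta>" "0 < \<delta>"
  shows "fps_decay c (inverse (b_fps p q \<theta>))"
proof (rule fps_decay_inverse_polynomial[where N = q and R = "1 + \<delta>"])
  show "q < n \<Longrightarrow> b_fps p q \<theta> $ n = 0" for n
    by (simp add: b_fps_def)
  show "cmod z < 1 + \<delta> \<Longrightarrow> (\<Sum>i\<le>q. of_real (b_fps p q \<theta> $ i) * z ^ i) \<noteq> 0" for z
    using assms(1) unfolding b_poly_eq_sum[symmetric] in_Theta_def by force
qed (use assms in simp)

section \<open>The binomial series of \<open>(1 - z) powr x\<close>\<close>

definition frac_coeff :: "nat \<Rightarrow> real \<Rightarrow> real" where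
  "frac_coeff n x = (\<Prod>i<n. (real i - x) / (real i + 1))"

definition frac_coeff_deriv :: "nat \<Rightarrow> real \<Rightarrow> real" where
  "frac_coeff_deriv n x = (\<Sum>l<n. (-1 / (real l + 1)) * (\<Prod>i\<in>{..<n} - {l}. (real i - x) / (real i + 1)))"

definition frac_coeff_tail :: "nat \<Rightarrow> real \<Rightarrow> real" where
  "frac_coeff_tail n x = (\<Prod>i\<in>{1..<n}. (real i - x) / (real i + 1))"

lemma frac_fps_nth: "frac_fps x $ n = frac_coeff n x"
proof -
  have "(-1) ^ n * (x gchoose n) = frac_coeff n x"
  proof (induction n)
    case 0
    then show ?case by (simp add: frac_coeff_def)
  next
    case (Suc n)
    have "(-1) ^ Suc n * (x gchoose Suc n) = ((-1) ^ n * (x gchoose n)) * ((real n - x) / (real n + 1))"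
      by (simp add: gbinomial_Suc_rec field_simps)
    also have "\<dots> = frac_coeff (Suc n) x"
      using Suc by (simp add: frac_coeff_def)
    finally show ?case .
  qed
  then show ?thesis by (simp add: frac_fps_def)
qed

lemma has_real_derivative_frac_coeff:
  "(frac_coeff n has_real_derivative frac_coeff_deriv n x) (at x)"
proof -
  have "((\<lambda>u. \<Prod>i\<in>{..<n}. (real i - u) / (real i + 1)) has_real_derivative
      (\<Sum>l\<in>{..<n}. (-1 / (real l + 1)) * (\<Prod>i\<in>{..<n} - {l}. (real i - x) / (real i + 1)))) (at x)"
  proof (rule has_field_derivative_prod)
    fix i
    have "((\<lambda>u. (real i - u) / (real i + 1)) has_real_derivative (0 - 1) / (real i + 1)) (at x)"
      by (intro DERIV_cdivide DERIV_diff DERIV_const DERIV_ident)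
    then show "((\<lambda>u. (real i - u) / (real i + 1)) has_real_derivative -1 / (real i + 1)) (at x)"
      by simp
  qed
  then show ?thesis
    unfolding frac_coeff_def[abs_def] frac_coeff_deriv_def by simp
qed

lemma frac_coeff_eq_tail:
  assumes "0 < n"
  shows "frac_coeff n x = - x * frac_coeff_tail n x"
proof -
  have "{..<n} = insert 0 {1..<n}"
    using assms by auto
  then show ?thesis
    by (simp add: frac_coeff_def frac_coeff_tail_def)
qed

text \<open>Each factor is \<open>1 - (1 + x)/(i + 1) \<le> exp (-(1 + x)/(i + 1))\<close>, and the harmonic sum
  collected in the exponent is at least \<open>ln (n + 1) - 1\<close>.\<close>

lemma frac_coeff_tail_bounds:
  assumes "-1 \<le> x" "x \<le> 1"
  shows "0 \<le> frac_coeff_tail n x" "frac_coeff_tail n x \<le> exp (1 + x) * (real n + 1) powr (-(1 + x))"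
proof -
  have factor: "0 \<le> (real i - x) / (real i + 1) \<and> (real i - x) / (real i + 1) \<le> exp (-(1 + x) / (real i + 1))"
    if "i \<in> {1..<n}" for i
  proof
    show "0 \<le> (real i - x) / (real i + 1)" using that assms by auto
    have "(real i - x) / (real i + 1) = 1 + (-(1 + x) / (real i + 1))" by (simp add: field_simps)
    also have "\<dots> \<le> exp (-(1 + x) / (real i + 1))" by (rule exp_ge_add_one_self)
    finally show "(real i - x) / (real i + 1) \<le> exp (-(1 + x) / (real i + 1))" .
  qed
  then show "0 \<le> frac_coeff_tail n x"
    unfolding frac_coeff_tail_def by (intro prod_nonneg) blast
  define S where "S = (\<Sum>i\<in>{1..<n}. 1 / (real i + 1))"
  have "ln (real n + 1) - 1 \<le> S"
  proof -
    have "harm n = (\<Sum>k<n. 1 / (real k + 1))" by (simp add: harm_altdef field_simps)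
    also have "\<dots> \<le> (\<Sum>k\<in>insert 0 {1..<n}. 1 / (real k + 1))" by (intro sum_mono2) auto
    also have "\<dots> = 1 + S" by (simp add: S_def)
    finally show ?thesis using ln_le_harm[of n] by linarith
  qed
  have "frac_coeff_tail n x \<le> (\<Prod>i\<in>{1..<n}. exp (-(1 + x) / (real i + 1)))"
    unfolding frac_coeff_tail_def using factor by (intro prod_mono) blast
  also have "\<dots> = exp (-(1 + x) * S)"
    by (simp add: exp_sum S_def sum_distrib_left)
  also have "\<dots> \<le> exp (-(1 + x) * (ln (real n + 1) - 1))"
    using \<open>ln (real n + 1) - 1 \<le> S\<close> assms by (intro exp_mono mult_left_mono_neg) auto
  also have "\<dots> = exp (1 + x) * (real n + 1) powr (-(1 + x))"
    by (simp add: powr_def algebra_simps flip: exp_add)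
  finally show "frac_coeff_tail n x \<le> exp (1 + x) * (real n + 1) powr (-(1 + x))" .
qed

lemma abs_frac_coeff_le:
  assumes "-1 \<le> x" "x \<le> 1"
  shows "\<bar>frac_coeff n x\<bar> \<le> exp (1 + x) * (real n + 1) powr (-(1 + x))"
proof (cases "n = 0")
  case True
  then show ?thesis using assms by (simp add: frac_coeff_def)
next
  case False
  have "\<bar>frac_coeff n x\<bar> = \<bar>x\<bar> * frac_coeff_tail n x"
    using False frac_coeff_tail_bounds(1)[OF assms] by (simp add: frac_coeff_eq_tail abs_mult)
  also have "\<dots> \<le> frac_coeff_tail n x"
    using frac_coeff_tail_bounds(1)[OF assms] assms by (intro mult_left_le_one_le) auto
  also have "\<dots> \<le> exp (1 + x) * (real n + 1) powr (-(1 + x))"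
    by (rule frac_coeff_tail_bounds(2)[OF assms])
  finally show ?thesis .
qed

lemma abs_frac_coeff_deriv_le:
  assumes "-1 \<le> x" "x \<le> 1/2"
  shows "\<bar>frac_coeff_deriv n x\<bar> \<le> 4 * harm n * frac_coeff_tail n x"
proof -
  let ?P = "frac_coeff_tail n x"
  have P0: "0 \<le> ?P" using frac_coeff_tail_bounds(1) assms by simp
  have term_le: "\<bar>(-1 / (real l + 1)) * (\<Prod>i\<in>{..<n} - {l}. (real i - x) / (real i + 1))\<bar>
      \<le> 4 * ?P * (1 / (real l + 1))" if "l < n" for l
  proof (cases "l = 0")
    case True
    then have "{..<n} - {l} = {1..<n}" by auto
    then show ?thesis using True P0 by (simp add: frac_coeff_tail_def)
  next
    case False
    define Q where "Q = (\<Prod>i\<in>{1..<n} - {l}. (real i - x) / (real i + 1))"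
    have Q0: "0 \<le> Q" unfolding Q_def using assms by (intro prod_nonneg) auto
    have "{..<n} - {l} = insert 0 ({1..<n} - {l})" using False that by auto
    then have prod_eq: "(\<Prod>i\<in>{..<n} - {l}. (real i - x) / (real i + 1)) = - x * Q"
      by (simp add: Q_def)
    have P_eq: "?P = ((real l - x) / (real l + 1)) * Q"
      unfolding frac_coeff_tail_def Q_def using False that by (subst prod.remove[of _ l]) auto
    have "1/4 \<le> (real l - x) / (real l + 1)"
      using False assms by (simp add: field_simps)
    from mult_right_mono[OF this Q0] have "Q \<le> 4 * ?P"
      unfolding P_eq by linarith
    moreover have "\<bar>x\<bar> * Q \<le> Q"
      using Q0 assms by (intro mult_left_le_one_le) auto
    ultimately have "\<bar>x\<bar> * Q \<le> 4 * ?P" by linarith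
    then show ?thesis
      using prod_eq Q0 by (simp add: abs_mult divide_right_mono)
  qed
  have "\<bar>frac_coeff_deriv n x\<bar> \<le> (\<Sum>l<n. 4 * ?P * (1 / (real l + 1)))"
    unfolding frac_coeff_deriv_def by (rule order_trans[OF sum_abs sum_mono]) (rule term_le, simp)
  also have "\<dots> = 4 * harm n * ?P"
    by (simp add: harm_altdef sum_distrib_left field_simps)
  finally show ?thesis .
qed

lemma harm_le_one_plus_ln: "harm n \<le> 1 + ln (real n + 1)"
proof (cases "n = 0")
  case True
  then show ?thesis by (simp add: harm_def)
next
  case False
  then have "harm n - ln (real n) \<le> harm 1 - ln (real 1)"
    by (intro euler_mascheroni_sequence_decreasing) auto
  then have "harm n \<le> 1 + ln (real n)" by (simp add: harm_def)
  also have "ln (real n) \<le> ln (real n + 1)" using False by simp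
  finally show ?thesis by simp
qed

lemma one_plus_ln_le_powr:
  fixes y e :: real
  assumes "1 \<le> y" "0 < e"
  shows "1 + ln y \<le> (1 + 1 / e) * y powr e"
proof -
  have "ln (y powr e) \<le> y powr e - 1" using assms by (intro ln_le_minus_one) auto
  then have "ln y \<le> y powr e / e" using assms by (simp add: ln_powr field_simps)
  moreover have "1 \<le> y powr e" using assms by (simp add: ge_one_powr_ge_zero)
  ultimately show ?thesis by (simp add: field_simps)
qed

lemma fps_decay_frac_fps:
  assumes "-1 \<le> x" "x \<le> 1"
  shows "fps_decay (1 + x) (frac_fps x)"
  unfolding fps_decay_def frac_fps_nth using abs_frac_coeff_le[OF assms] by blast

definition frac_fps_deriv :: "real \<Rightarrow> real fps" where
  "frac_fps_deriv x = Abs_fps (\<lambda>n. frac_coeff_deriv n x)"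

lemma fps_decay_frac_fps_deriv:
  assumes "-1 \<le> x" "x \<le> 1/2" "0 < e"
  shows "fps_decay (1 + x - e) (frac_fps_deriv x)"
proof -
  have "\<bar>frac_coeff_deriv n x\<bar> \<le> (4 * (1 + 1 / e) * exp (1 + x)) * (real n + 1) powr (-(1 + x - e))" for n
  proof -
    have harm_le: "harm n \<le> (1 + 1 / e) * (real n + 1) powr e"
      using harm_le_one_plus_ln[of n] one_plus_ln_le_powr[of "real n + 1" e] assms(3) by simp
    have "\<bar>frac_coeff_deriv n x\<bar> \<le> 4 * harm n * frac_coeff_tail n x"
      by (rule abs_frac_coeff_deriv_le[OF assms(1,2)])
    also have "\<dots> \<le> 4 * ((1 + 1 / e) * (real n + 1) powr e) * (exp (1 + x) * (real n + 1) powr (-(1 + x)))"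
      using frac_coeff_tail_bounds[of x n] assms harm_nonneg[of n] harm_le
      by (intro mult_mono) auto
    also have "\<dots> = (4 * (1 + 1 / e) * exp (1 + x)) * ((real n + 1) powr e * (real n + 1) powr (-(1 + x)))"
      by (simp add: mult_ac)
    also have "(real n + 1) powr e * (real n + 1) powr (-(1 + x)) = (real n + 1) powr (-(1 + x - e))"
      by (simp add: algebra_simps flip: powr_add)
    finally show ?thesis .
  qed
  then show ?thesis
    unfolding fps_decay_def frac_fps_deriv_def by auto
qed

section \<open>Coefficientwise derivatives\<close>

definition has_coeff_derivative :: "(real \<Rightarrow> real fps) \<Rightarrow> real fps \<Rightarrow> real \<Rightarrow> bool" where
  "has_coeff_derivative f f' x0 \<longleftrightarrow> (\<forall>n. ((\<lambda>x. f x $ n) has_real_derivative f' $ n) (at x0))"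

lemma has_coeff_derivative_const: "has_coeff_derivative (\<lambda>x. c) 0 x0"
  unfolding has_coeff_derivative_def by simp

lemma has_coeff_derivative_mult:
  assumes "has_coeff_derivative f f' x0" "has_coeff_derivative g g' x0"
  shows "has_coeff_derivative (\<lambda>x. f x * g x) (f' * g x0 + f x0 * g') x0"
  unfolding has_coeff_derivative_def
proof
  fix n
  have "((\<lambda>x. \<Sum>i=0..n. f x $ i * g x $ (n - i)) has_real_derivative
      (\<Sum>i=0..n. f' $ i * g x0 $ (n - i) + f x0 $ i * g' $ (n - i))) (at x0)"
    using assms unfolding has_coeff_derivative_def
    by (intro DERIV_sum) (auto intro!: derivative_eq_intros)
  then show "((\<lambda>x. (f x * g x) $ n) has_real_derivative (f' * g x0 + f x0 * g') $ n) (at x0)"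
    by (simp add: fps_mult_nth sum.distrib)
qed

lemma fps_mult_nth_split_first:
  "(g * h) $ n = g $ 0 * h $ n + (\<Sum>i=1..n. g $ i * h $ (n - i))"
proof -
  have "(g * h) $ n = (\<Sum>i=0..n. g $ i * h $ (n - i))"
    by (rule fps_mult_nth)
  also have "\<dots> = g $ 0 * h $ n + (\<Sum>i=Suc 0..n. g $ i * h $ (n - i))"
    by (subst sum.atLeast_Suc_atMost) auto
  finally show ?thesis
    by (simp only: One_nat_def)
qed

lemma fps_inverse_nth_rec:
  fixes f :: "'a::division_ring fps"
  assumes "f $ 0 = 1" "0 < n"
  shows "inverse f $ n = - (\<Sum>i=1..n. f $ i * inverse f $ (n - i))"
  using fps_mult_nth_split_first[of f "inverse f" n] assms
  by (simp add: inverse_mult_eq_1' eq_neg_iff_add_eq_0)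

lemma has_coeff_derivative_nth_0:
  assumes "\<And>x. f x $ 0 = c" "has_coeff_derivative f f' x0"
  shows "f' $ 0 = 0"
proof -
  have "((\<lambda>x. f x $ 0) has_real_derivative f' $ 0) (at x0)"
    using assms(2) unfolding has_coeff_derivative_def by blast
  then have "((\<lambda>x. c) has_real_derivative f' $ 0) (at x0)"
    using assms(1) by simp
  then show ?thesis
    using DERIV_const DERIV_unique by blast
qed

lemma fps_nth_solve_mult_eq:
  fixes g h u v :: "real fps"
  assumes "g $ 0 = 1" "u $ 0 = 0" "g * h = - (u * v)"
  shows "h $ n = - (\<Sum>i=1..n. u $ i * v $ (n - i) + g $ i * h $ (n - i))"
proof -
  have "(g * h) $ n = h $ n + (\<Sum>i=1..n. g $ i * h $ (n - i))"
    using fps_mult_nth_split_first[of g h n] assms(1) by simp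
  moreover have "(u * v) $ n = (\<Sum>i=1..n. u $ i * v $ (n - i))"
    using fps_mult_nth_split_first[of u v n] assms(2) by simp
  moreover have "(g * h) $ n = - ((u * v) $ n)"
    using assms(3) by simp
  ultimately show ?thesis
    unfolding sum.distrib by linarith
qed

lemma has_coeff_derivative_inverse:
  assumes one: "\<And>x. f x $ 0 = 1" and f': "has_coeff_derivative f f' x0"
  shows "has_coeff_derivative (\<lambda>x. inverse (f x)) (- (inverse (f x0) * inverse (f x0) * f')) x0"
proof -
  define I where "I = inverse (f x0)"
  define D where "D = - (I * I * f')"
  have f'0: "f' $ 0 = 0"
    using one f' by (rule has_coeff_derivative_nth_0)
  have "f x0 * I = 1"
    unfolding I_def using one by (simp add: inverse_mult_eq_1')
  moreover have "f x0 * D = - ((f x0 * I) * I * f')"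
    by (simp add: D_def mult.assoc)
  ultimately have fD: "f x0 * D = - (f' * I)"
    by (simp add: mult.commute)
  have "((\<lambda>x. inverse (f x) $ n) has_real_derivative D $ n) (at x0)" for n
  proof (induction n rule: less_induct)
    case (less n)
    show ?case
    proof (cases "n = 0")
      case True
      then show ?thesis using one f'0 by (simp add: D_def)
    next
      case False
      have inverse_rec: "inverse (f x) $ n = - (\<Sum>i=1..n. f x $ i * inverse (f x) $ (n - i))" for x
        using one False by (simp add: fps_inverse_nth_rec)
      have D_rec: "D $ n = - (\<Sum>i=1..n. f' $ i * I $ (n - i) + f x0 $ i * D $ (n - i))"
        using one f'0 fD by (rule fps_nth_solve_mult_eq)
      have "((\<lambda>x. f x $ i * inverse (f x) $ (n - i)) has_real_derivative
          f' $ i * I $ (n - i) + f x0 $ i * D $ (n - i)) (at x0)" if "i \<in> {1..n}" for i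
      proof -
        have "((\<lambda>x. f x $ i) has_real_derivative f' $ i) (at x0)"
          using f' unfolding has_coeff_derivative_def by blast
        moreover have "((\<lambda>x. inverse (f x) $ (n - i)) has_real_derivative D $ (n - i)) (at x0)"
          using that False by (intro less) auto
        ultimately show ?thesis
          using DERIV_mult by (fastforce simp: I_def mult.commute)
      qed
      then have "((\<lambda>x. - (\<Sum>i=1..n. f x $ i * inverse (f x) $ (n - i))) has_real_derivative
          - (\<Sum>i=1..n. f' $ i * I $ (n - i) + f x0 $ i * D $ (n - i))) (at x0)"
        by (intro DERIV_minus DERIV_sum)
      then show ?thesis
        unfolding inverse_rec D_rec .
    qed
  qed
  then show ?thesis
    unfolding has_coeff_derivative_def D_def I_def by blast
qed

definition a_fps_deriv :: "nat \<Rightarrow> nat \<Rightarrow> real fps" where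
  "a_fps_deriv p k = (if 1 \<le> k \<and> k \<le> p then - (fps_X ^ k) else 0)"

definition b_fps_deriv :: "nat \<Rightarrow> nat \<Rightarrow> nat \<Rightarrow> real fps" where
  "b_fps_deriv p q k = (if p < k \<and> k \<le> p + q then - (fps_X ^ (k - p)) else 0)"

lemma has_coeff_derivative_a_fps:
  "has_coeff_derivative (\<lambda>x. a_fps p (\<theta>(k := x))) (a_fps_deriv p k) (\<theta> k)"
  unfolding has_coeff_derivative_def
proof
  fix n
  show "((\<lambda>x. a_fps p (\<theta>(k := x)) $ n) has_real_derivative a_fps_deriv p k $ n) (at (\<theta> k))"
  proof (cases "1 \<le> n \<and> n \<le> p \<and> n = k")
    case True
    then have "(\<lambda>x. a_fps p (\<theta>(k := x)) $ n) = (\<lambda>x. - x)" "a_fps_deriv p k $ n = -1"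
      by (auto simp: a_fps_def a_fps_deriv_def)
    then show ?thesis by (auto intro!: derivative_eq_intros)
  next
    case False
    then have "(\<lambda>x. a_fps p (\<theta>(k := x)) $ n) = (\<lambda>x. a_fps p \<theta> $ n)" "a_fps_deriv p k $ n = 0"
      by (auto simp: a_fps_def a_fps_deriv_def)
    then show ?thesis by simp
  qed
qed

lemma has_coeff_derivative_b_fps:
  "has_coeff_derivative (\<lambda>x. b_fps p q (\<theta>(k := x))) (b_fps_deriv p q k) (\<theta> k)"
  unfolding has_coeff_derivative_def
proof
  fix n
  show "((\<lambda>x. b_fps p q (\<theta>(k := x)) $ n) has_real_derivative b_fps_deriv p q k $ n) (at (\<theta> k))"
  proof (cases "1 \<le> n \<and> n \<le> q \<and> p + n = k")
    case True
    then have "(\<lambda>x. b_fps p q (\<theta>(k := x)) $ n) = (\<lambda>x. - x)" "b_fps_deriv p q k $ n = -1"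
      by (auto simp: b_fps_def b_fps_deriv_def)
    then show ?thesis by (auto intro!: derivative_eq_intros)
  next
    case False
    then have "(\<lambda>x. b_fps p q (\<theta>(k := x)) $ n) = (\<lambda>x. b_fps p q \<theta> $ n)" "b_fps_deriv p q k $ n = 0"
      by (auto simp: b_fps_def b_fps_deriv_def)
    then show ?thesis by simp
  qed
qed

lemma has_coeff_derivative_frac_fps:
  "has_coeff_derivative (\<lambda>x. frac_fps ((\<theta>(k := x)) (p + q + 1)))
     (if k = p + q + 1 then frac_fps_deriv (\<theta> k) else 0) (\<theta> k)"
proof (cases "k = p + q + 1")
  case True
  then show ?thesis
    unfolding has_coeff_derivative_def
    by (simp add: frac_fps_nth frac_fps_deriv_def has_real_derivative_frac_coeff)
next
  case False
  then show ?thesis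
    using has_coeff_derivative_const[of "frac_fps (\<theta> (p + q + 1))"] by simp
qed

definition gamma_deriv_fps :: "nat \<Rightarrow> nat \<Rightarrow> nat \<Rightarrow> (nat \<Rightarrow> real) \<Rightarrow> real fps" where
  "gamma_deriv_fps p q k \<theta> =
     (- (inverse (b_fps p q \<theta>) * inverse (b_fps p q \<theta>) * b_fps_deriv p q k) * a_fps p \<theta>
        + inverse (b_fps p q \<theta>) * a_fps_deriv p k) * frac_fps (\<theta> (p + q + 1))
     + inverse (b_fps p q \<theta>) * a_fps p \<theta> * (if k = p + q + 1 then frac_fps_deriv (\<theta> k) else 0)"

lemma has_coeff_derivative_gamma:
  "has_coeff_derivative
     (\<lambda>x. inverse (b_fps p q (\<theta>(k := x))) * a_fps p (\<theta>(k := x)) * frac_fps ((\<theta>(k := x)) (p + q + 1)))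
     (gamma_deriv_fps p q k \<theta>) (\<theta> k)"
proof -
  have "\<And>x. b_fps p q (\<theta>(k := x)) $ 0 = 1"
    by (simp add: b_fps_def)
  from has_coeff_derivative_mult[OF has_coeff_derivative_mult[OF
        has_coeff_derivative_inverse[OF this has_coeff_derivative_b_fps] has_coeff_derivative_a_fps[of p \<theta> k]]
      has_coeff_derivative_frac_fps[of \<theta> k p q]]
  show ?thesis
    unfolding gamma_deriv_fps_def fun_upd_triv .
qed

lemma deriv_gamma_t:
  "deriv (\<lambda>x. gamma_t p q t (\<theta>(k := x)) j) (\<theta> k) = (if j < t then gamma_deriv_fps p q k \<theta> $ j else 0)"
proof (cases "j < t")
  case True
  then have "(\<lambda>x. gamma_t p q t (\<theta>(k := x)) j) =
      (\<lambda>x. (inverse (b_fps p q (\<theta>(k := x))) * a_fps p (\<theta>(k := x)) * frac_fps ((\<theta>(k := x)) (p + q + 1))) $ j)"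
    by (simp add: gamma_t_def gamma_def)
  with True show ?thesis
    using has_coeff_derivative_gamma unfolding has_coeff_derivative_def by (simp add: DERIV_imp_deriv)
next
  case False
  then show ?thesis by (simp add: gamma_t_def)
qed

lemma fps_decay_gamma_deriv:
  assumes "in_Theta p q \<delta> d1 d2 \<theta>" "0 < \<delta>"
    and \<alpha>: "0 < \<alpha>" "\<alpha> < 1" "\<alpha> < 1 + \<theta> (p + q + 1)" and "\<theta> (p + q + 1) \<le> 1/2"
  shows "fps_decay \<alpha> (gamma_deriv_fps p q k \<theta>)"
proof -
  let ?d = "\<theta> (p + q + 1)"
  have mult2: "fps_decay 2 f \<Longrightarrow> fps_decay 2 g \<Longrightarrow> fps_decay 2 (f * g)" for f g
    by (rule fps_decay_mult_summable) auto
  have mult_alpha: "fps_decay 2 f \<Longrightarrow> fps_decay \<alpha> g \<Longrightarrow> fps_decay \<alpha> (f * g)" for f g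
    using \<alpha> by (intro fps_decay_mult_summable) auto
  have B: "fps_decay 2 (inverse (b_fps p q \<theta>))"
    using assms(1,2) by (rule fps_decay_inverse_b_fps)
  have A: "fps_decay 2 (a_fps p \<theta>)"
    by (rule fps_decay_polynomial[where N = p]) (auto simp: a_fps_def)
  have "fps_decay 2 (a_fps_deriv p k)"
    by (rule fps_decay_polynomial[where N = p]) (auto simp: a_fps_deriv_def)
  moreover have "fps_decay 2 (b_fps_deriv p q k)"
    by (rule fps_decay_polynomial[where N = q]) (auto simp: b_fps_deriv_def)
  ultimately have left: "fps_decay 2 (- (inverse (b_fps p q \<theta>) * inverse (b_fps p q \<theta>) * b_fps_deriv p q k) * a_fps p \<theta>
        + inverse (b_fps p q \<theta>) * a_fps_deriv p k)"
    using A B by (intro fps_decay_add fps_decay_uminus mult2)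
  have "fps_decay (1 + ?d) (frac_fps ?d)"
    using \<alpha> assms(6) by (intro fps_decay_frac_fps) auto
  then have frac: "fps_decay \<alpha> (frac_fps ?d)"
    by (rule fps_decay_mono) (use \<alpha> in simp)
  have "fps_decay (1 + ?d - (1 + ?d - \<alpha>)) (frac_fps_deriv ?d)"
    using \<alpha> assms(6) by (intro fps_decay_frac_fps_deriv) auto
  then have frac': "fps_decay \<alpha> (if k = p + q + 1 then frac_fps_deriv (\<theta> k) else 0)"
    using \<alpha> by (auto intro: fps_decay_polynomial[where N = 0])
  show ?thesis
    unfolding gamma_deriv_fps_def
    by (intro fps_decay_add mult_alpha[OF left frac] mult_alpha[OF mult2[OF B A] frac'])
qed

section \<open>\<open>\<ell>\<^sup>r\<close> norms of power-law sequences\<close>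

lemma lr_norm_le_of_powr_decay:
  fixes u :: "nat \<Rightarrow> real" and r :: ereal
  assumes u: "\<And>n. \<bar>u n\<bar> \<le> K * (real n + 1) powr (-s)" and s: "1/2 < s" and r: "2 \<le> r" and K: "0 \<le> K"
  shows "lr_norm r u
    \<le> ereal (max K ((\<Sum>n. (K * (real n + 1) powr (-s)) powr real_of_ereal r) powr (1 / real_of_ereal r)))"
proof (cases "r = \<infinity>")
  case True
  have "(SUP n. ereal \<bar>u n\<bar>) \<le> ereal K"
  proof (rule SUP_least)
    fix n
    have "(real n + 1) powr (-s) \<le> 1"
      using powr_mono2'[of "-s" 1 "real n + 1"] s by simp
    then have "K * (real n + 1) powr (-s) \<le> K"
      using K by (simp add: mult_left_le)
    then show "ereal \<bar>u n\<bar> \<le> ereal K"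
      using u[of n] by simp
  qed
  then have "lr_norm r u \<le> ereal K"
    using True by (simp add: lr_norm_def)
  then show ?thesis
    by (rule order_trans) simp
next
  case False
  obtain \<rho> where rho: "r = ereal \<rho>"
    using False r by (cases r) auto
  have rho2: "2 \<le> \<rho>"
    using r rho by simp
  define g where "g n = (K * (real n + 1) powr (-s)) powr \<rho>" for n
  have "1 < s * \<rho>"
    using mult_left_mono[of 2 \<rho> s] s rho2 by linarith
  then have summable_g: "summable g"
    unfolding g_def using K by (simp add: powr_mult powr_powr summable_mult summable_powr_Suc)
  have ug: "\<bar>u n\<bar> powr \<rho> \<le> g n" for n
    unfolding g_def using u[of n] rho2 by (intro powr_mono2) auto
  have summable_u: "summable (\<lambda>n. \<bar>u n\<bar> powr \<rho>)"
    by (rule summable_comparison_test[OF _ summable_g]) (use ug in auto)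
  have "(\<Sum>n. \<bar>u n\<bar> powr \<rho>) \<le> (\<Sum>n. g n)"
    by (rule suminf_le[OF ug summable_u summable_g])
  moreover have "0 \<le> (\<Sum>n. \<bar>u n\<bar> powr \<rho>)"
    by (intro suminf_nonneg summable_u) auto
  ultimately have "(\<Sum>n. \<bar>u n\<bar> powr \<rho>) powr (1 / \<rho>) \<le> (\<Sum>n. g n) powr (1 / \<rho>)"
    using rho2 by (intro powr_mono2) auto
  then show ?thesis
    unfolding lr_norm_def g_def using False summable_u rho by (simp add: le_max_iff_disj)
qed

lemma fps_decay_eta_fps:
  assumes "in_Theta p q \<delta> d1 d2 \<theta>0" "0 < \<delta>"
    and "0 \<le> \<beta>" "\<beta> \<le> 1 - \<theta>0 (p + q + 1)" "-1 \<le> \<theta>0 (p + q + 1)"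
  shows "fps_decay \<beta> (frac_fps (- \<theta>0 (p + q + 1)) * inverse (a_fps p \<theta>0) * b_fps p q \<theta>0)"
proof -
  let ?d = "\<theta>0 (p + q + 1)"
  have "fps_decay (1 - ?d) (frac_fps (- ?d))"
    using fps_decay_frac_fps[of "- ?d"] assms(3-5) by simp
  then have "fps_decay \<beta> (frac_fps (- ?d))"
    by (rule fps_decay_mono) (use assms in simp)
  then have "fps_decay \<beta> (inverse (a_fps p \<theta>0) * frac_fps (- ?d))"
    by (rule fps_decay_mult_summable[where c = 2, OF fps_decay_inverse_a_fps[OF assms(1,2)]])
       (use assms in auto)
  moreover have "fps_decay 2 (b_fps p q \<theta>0)"
    by (rule fps_decay_polynomial[where N = q]) (auto simp: b_fps_def)
  ultimately have "fps_decay \<beta> (b_fps p q \<theta>0 * (inverse (a_fps p \<theta>0) * frac_fps (- ?d)))"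
    using assms(3-5) fps_decay_mult_summable[where c = 2] by simp
  then show ?thesis
    by (simp add: mult_ac)
qed

lemma dlambda_eq_truncated_convolution:
  "dlambda p q t k \<theta> \<theta>0 n = (\<Sum>j\<le>n. (if j < t then gamma_deriv_fps p q k \<theta> $ j else 0) *
     (frac_fps (- \<theta>0 (p + q + 1)) * inverse (a_fps p \<theta>0) * b_fps p q \<theta>0) $ (n - j))"
  by (simp add: dlambda_def deriv_gamma_t eta_def)

lemma exists_decay_exponents:
  fixes d d0 :: real
  assumes "-1/2 < d" "d0 < 1/2" "-1/2 < d - d0"
  obtains \<alpha> \<beta> where "0 < \<alpha>" "\<alpha> < 1" "\<alpha> < 1 + d" "0 < \<beta>" "\<beta> < 1" "\<beta> < 1 - d0"
    "1/2 < \<alpha> + \<beta> - 1"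
proof -
  define m n where "m = min 1 (1 + d)" and "n = min 1 (1 - d0)"
  have mn: "m \<le> 1" "m \<le> 1 + d" "1/2 < m" "n \<le> 1" "n \<le> 1 - d0" "3/2 < m + n"
    using assms by (auto simp: m_def n_def min_def)
  define \<epsilon> where "\<epsilon> = (m + n - 3/2) / 4"
  have "4 * \<epsilon> = m + n - 3/2"
    by (simp add: \<epsilon>_def)
  then show ?thesis
    using mn by (intro that[of "m - \<epsilon>" "n - \<epsilon>"]) linarith+
qed

theorem lemma2:
  fixes p q :: nat and a b :: "nat \<Rightarrow> real" and d0 d1 d2 \<delta> :: real
    and \<theta> :: "nat \<Rightarrow> real" and r :: ereal and k :: nat
  defines "\<theta>0 \<equiv> (\<lambda>i. if 1 \<le> i \<and> i \<le> p then a i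
                     else if p + 1 \<le> i \<and> i \<le> p + q then b (i - p)
                     else if i = p + q + 1 then d0 else 0)"
  assumes d0: "-1/2 < d0" "d0 < 1/2"
    and a_roots: "\<forall>z. 1 - (\<Sum>i=1..p. complex_of_real (a i) * z ^ i) = 0 \<longrightarrow> 1 < cmod z"
    and b_roots: "\<forall>z. 1 - (\<Sum>j=1..q. complex_of_real (b j) * z ^ j) = 0 \<longrightarrow> 1 < cmod z"
    and coprime: "\<not> (\<exists>z. 1 - (\<Sum>i=1..p. complex_of_real (a i) * z ^ i) = 0 \<and>
                          1 - (\<Sum>j=1..q. complex_of_real (b j) * z ^ j) = 0)"
    and delta: "0 < \<delta>"
    and d12: "-1/2 < d1" "d1 \<le> d2" "d2 < 1/2" "d1 - d0 > -1/2"
    and theta0: "in_Theta p q \<delta> d1 d2 \<theta>0"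
    and theta: "in_Theta p q \<delta> d1 d2 \<theta>"
    and r: "2 \<le> r"
    and k: "1 \<le> k" "k \<le> p + q + 1"
  shows "\<exists>K::real. \<forall>t\<ge>1. lr_norm r (dlambda p q t k \<theta> \<theta>0) \<le> ereal K"
proof -
  let ?d = "\<theta> (p + q + 1)"
  have d: "d1 \<le> ?d" "?d \<le> d2" and d0_eq: "\<theta>0 (p + q + 1) = d0"
    using theta by (simp_all add: in_Theta_def \<theta>0_def)
  obtain \<alpha> \<beta> where \<alpha>: "0 < \<alpha>" "\<alpha> < 1" "\<alpha> < 1 + ?d" and \<beta>: "0 < \<beta>" "\<beta> < 1" "\<beta> < 1 - d0"
    and \<alpha>\<beta>: "1/2 < \<alpha> + \<beta> - 1"
    using exists_decay_exponents[of ?d d0] d d0 d12 by auto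
  have "fps_decay \<alpha> (gamma_deriv_fps p q k \<theta>)"
    using theta delta \<alpha> d d12 by (intro fps_decay_gamma_deriv) auto
  moreover have "fps_decay \<beta> (frac_fps (- \<theta>0 (p + q + 1)) * inverse (a_fps p \<theta>0) * b_fps p q \<theta>0)"
    using theta0 delta \<beta> d0 d0_eq by (intro fps_decay_eta_fps) auto
  ultimately obtain K where K: "\<forall>t n. \<bar>dlambda p q t k \<theta> \<theta>0 n\<bar> \<le> K * (real n + 1) powr (-(\<alpha> + \<beta> - 1))"
    unfolding dlambda_eq_truncated_convolution using truncated_convolution_decay \<alpha> \<beta> by blast
  have "0 \<le> K"
    using K by (intro powr_bound_nonneg[where u = "dlambda p q 0 k \<theta> \<theta>0"]) blast
  then have "lr_norm r (dlambda p q t k \<theta> \<theta>0) \<le> ereal (max K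
      ((\<Sum>n. (K * (real n + 1) powr (-(\<alpha> + \<beta> - 1))) powr real_of_ereal r) powr (1 / real_of_ereal r)))" for t
    using K \<alpha>\<beta> r by (intro lr_norm_le_of_powr_decay) auto
  then show ?thesis
    by blast
qed

end
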